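(* Let $\mathcal{H}$ be an infinite-dimensional complex separable Hilbert space, $A\in\mathcal{B}(\mathcal{H})$ such that $\{e^{tA}\}_{t\ge0}$ is exponentially stable, and $\mathcal{G}\subset\mathcal{H}$ countable. If $\{e^{tA}g\}_{g\in\mathcal{G},\,t\in[0,\infty)}$ is a semi-continuous frame for $\mathcal{H}$, then $|\mathcal{G}|=\infty$.
   Context: For $A\in\mathcal{B}(\mathcal{H})$, $e^{tA}:=\sum_{n\ge0}\frac{t^n}{n!}A^n$. The semigroup $\{e^{tA}\}_{t\ge0}$ is exponentially stable if there are constants $M\ge1$ and $\omega<0$ with $\|e^{tA}\|\le Me^{\omega t}$ for all $t\ge0$. For a countable $\mathcal{G}\subset\mathcal{H}$ and an interval $\mathcal{T}\subset[0,\infty)$, $\{e^{tA}g\}_{g\in\mathcal{G},t\in\mathcal{T}}$ is a semi-continuous frame for $\mathcal{H}$ if there are constants $c,C>0$ such that $c\|f\|^2\le\sum_{g\in\mathcal{G}}\int_{\mathcal{T}}|\langle f,e^{tA}g\rangle|^2\,dt\le C\|f\|^2$ for all $f\in\mathcal{H}$. *)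

theory Defs
  imports "HOL-Analysis.Analysis"
begin

class complex_vector = real_vector +
  fixes cscale :: "complex \<Rightarrow> 'a \<Rightarrow> 'a"
  assumes cscale_add_right: "cscale a (x + y) = cscale a x + cscale a y"
    and cscale_add_left: "cscale (a + b) x = cscale a x + cscale b x"
    and cscale_cscale: "cscale a (cscale b x) = cscale (a * b) x"
    and cscale_one: "cscale 1 x = x"
    and scaleR_cscale: "scaleR r x = cscale (complex_of_real r) x"

class complex_inner = complex_vector + real_normed_vector +
  fixes cinner :: "'a \<Rightarrow> 'a \<Rightarrow> complex"
  assumes cinner_conj: "cinner x y = cnj (cinner y x)"
    and cinner_add_left: "cinner (x + y) z = cinner x z + cinner y z"
    and cinner_cscale_left: "cinner (cscale c x) y = c * cinner x y"
    and cinner_ge_zero: "0 \<le> Re (cinner x x)"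
    and cinner_eq_zero_iff: "cinner x x = 0 \<longleftrightarrow> x = 0"
    and norm_eq_sqrt_cinner: "norm x = sqrt (Re (cinner x x))"

text \<open>A complex Hilbert space is then a type of class
  \<open>{complex_inner, complete_space}\<close>.\<close>

definition separable_type :: "'a::metric_space itself \<Rightarrow> bool" where
  "separable_type _ \<longleftrightarrow> (\<exists>D::'a set. countable D \<and> closure D = UNIV)"

definition infinite_dimensional :: "'a::complex_vector itself \<Rightarrow> bool" where
  "infinite_dimensional _ \<longleftrightarrow>
     \<not> (\<exists>S::'a set. finite S \<and> (\<forall>x. \<exists>c. x = (\<Sum>s\<in>S. cscale (c s) s)))"

definition complex_linear_op :: "('a::{complex_vector,real_normed_vector} \<Rightarrow>\<^sub>L 'a) \<Rightarrow> bool" where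
  "complex_linear_op A \<longleftrightarrow> (\<forall>c x. blinfun_apply A (cscale c x) = cscale c (blinfun_apply A x))"

primrec op_power :: "('a::real_normed_vector \<Rightarrow>\<^sub>L 'a) \<Rightarrow> nat \<Rightarrow> ('a \<Rightarrow>\<^sub>L 'a)" where
  "op_power A 0 = id_blinfun"
| "op_power A (Suc n) = A o\<^sub>L op_power A n"

definition op_exp :: "real \<Rightarrow> ('a::real_normed_vector \<Rightarrow>\<^sub>L 'a) \<Rightarrow> ('a \<Rightarrow>\<^sub>L 'a)" where
  "op_exp t A = (\<Sum>n. (t ^ n / fact n) *\<^sub>R op_power A n)"

definition exp_stable :: "('a::real_normed_vector \<Rightarrow>\<^sub>L 'a) \<Rightarrow> bool" where
  "exp_stable A \<longleftrightarrow> (\<exists>M \<ge> 1. \<exists>\<omega> < 0. \<forall>t \<ge> 0. norm (op_exp t A) \<le> M * exp (\<omega> * t))"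

definition semi_cont_frame :: "('a::{complex_inner} \<Rightarrow>\<^sub>L 'a) \<Rightarrow> 'a set \<Rightarrow> real set \<Rightarrow> bool" where
  "semi_cont_frame A G T \<longleftrightarrow>
     (\<exists>c C. c > 0 \<and> C > 0 \<and> (\<forall>f::'a.
        ennreal (c * (norm f)\<^sup>2)
          \<le> (\<Sum>\<^sub>\<infinity>g\<in>G. \<integral>\<^sup>+ t\<in>T. ennreal ((cmod (cinner f (blinfun_apply (op_exp t A) g)))\<^sup>2) \<partial>lborel)
      \<and> (\<Sum>\<^sub>\<infinity>g\<in>G. \<integral>\<^sup>+ t\<in>T. ennreal ((cmod (cinner f (blinfun_apply (op_exp t A) g)))\<^sup>2) \<partial>lborel)
          \<le> ennreal (C * (norm f)\<^sup>2)))"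

end

theory Submission
  imports Defs
begin

text \<open>If \<open>G\<close> were finite, the stability bound \<open>\<parallel>e^{tA}\<parallel> \<le> M e^{\<omega>t}\<close> together with Bessel's
  inequality would bound the frame sums of any \<open>N\<close> orthonormal vectors, added up, by
  \<open>K = \<Sum>_{g\<in>G} \<integral>_0^\<infinity> \<parallel>e^{tA}g\<parallel>^2 dt \<le> \<Sum>_{g\<in>G} M^2\<parallel>g\<parallel>^2/(-2\<omega>)\<close>, independently of \<open>N\<close>.
  The lower frame bound makes the same total at least \<open>cN\<close>, and an infinite-dimensional space
  contains orthonormal families of every length.\<close>

lemma cinner_add_right: "cinner x (y + z) = cinner x y + cinner (x::'a::complex_inner) z"
  by (metis cinner_conj cinner_add_left complex_cnj_add)

lemma cinner_cscale_right: "cinner x (cscale c y) = cnj c * cinner (x::'a::complex_inner) y"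
  by (metis cinner_conj cinner_cscale_left complex_cnj_mult complex_cnj_cnj)

lemma cinner_zero_left [simp]: "cinner 0 (y::'a::complex_inner) = 0"
  using cinner_add_left[of "0::'a" 0 y] by simp

lemma cinner_zero_right [simp]: "cinner x (0::'a::complex_inner) = 0"
  using cinner_add_right[of x "0::'a" 0] by simp

lemma cinner_diff_left: "cinner (x - y) z = cinner x z - cinner (y::'a::complex_inner) z"
  using cinner_add_left[of "x - y" y z] by simp

lemma cinner_diff_right: "cinner x (y - z) = cinner x y - cinner (x::'a::complex_inner) z"
  using cinner_add_right[of x "y - z" z] by simp

lemma cinner_sum_left: "cinner (\<Sum>i\<in>I. f i) (y::'a::complex_inner) = (\<Sum>i\<in>I. cinner (f i) y)"
  by (induction I rule: infinite_finite_induct) (auto simp: cinner_add_left)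

lemma cinner_sum_right: "cinner y (\<Sum>i\<in>I. f i) = (\<Sum>i\<in>I. cinner (y::'a::complex_inner) (f i))"
  by (induction I rule: infinite_finite_induct) (auto simp: cinner_add_right)

lemma cinner_self: "cinner x (x::'a::complex_inner) = complex_of_real ((norm x)\<^sup>2)"
proof -
  have "Im (cinner x x) = 0"
    using cinner_conj[of x x]
    by (metis complex_cnj_cancel_iff complex_cnj_zero_iff complex_is_Real_iff Reals_cnj_iff)
  moreover have "Re (cinner x x) = (norm x)\<^sup>2"
    using norm_eq_sqrt_cinner[of x] cinner_ge_zero[of x] by simp
  ultimately show ?thesis
    by (simp add: complex_eq_iff)
qed

lemma cinner_normalize_self:
  assumes "x \<noteq> 0"
  shows "cinner (cscale (1 / norm x) x) (cscale (1 / norm x) (x::'a::complex_inner)) = 1"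
proof -
  have "cinner (cscale (1 / norm x) x) (cscale (1 / norm x) x)
      = complex_of_real (1 / norm x) * complex_of_real (1 / norm x) * cinner x x"
    by (simp add: cinner_cscale_left cinner_cscale_right)
  then show ?thesis
    using assms by (simp add: cinner_self power2_eq_square)
qed

definition orthonormal_on :: "'b set \<Rightarrow> ('b \<Rightarrow> 'a::complex_inner) \<Rightarrow> bool" where
  "orthonormal_on I e \<longleftrightarrow> (\<forall>i\<in>I. \<forall>j\<in>I. cinner (e i) (e j) = (if i = j then 1 else 0))"

lemma orthonormal_on_norm: "orthonormal_on I e \<Longrightarrow> i \<in> I \<Longrightarrow> norm (e i) = 1"
  using norm_eq_sqrt_cinner[of "e i"] by (simp add: orthonormal_on_def)

lemma cinner_sum_orthonormal_left:
  assumes "finite I" "orthonormal_on I e" "k \<in> I"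
  shows "cinner (\<Sum>i\<in>I. cscale (c i) (e i)) (e k) = c (k::'b)"
proof -
  have "cinner (\<Sum>i\<in>I. cscale (c i) (e i)) (e k) = (\<Sum>i\<in>I. if i = k then c i else 0)"
    unfolding cinner_sum_left cinner_cscale_left
    by (rule sum.cong) (use assms in \<open>auto simp: orthonormal_on_def\<close>)
  then show ?thesis
    using assms by simp
qed

lemma bessel_inequality:
  fixes e :: "'b \<Rightarrow> 'a::complex_inner"
  assumes "finite I" "orthonormal_on I e"
  shows "(\<Sum>i\<in>I. (cmod (cinner (e i) v))\<^sup>2) \<le> (norm v)\<^sup>2"
proof -
  define a where "a i = cinner v (e i)" for i
  define u where "u = (\<Sum>i\<in>I. cscale (a i) (e i))"
  define s where "s = (\<Sum>i\<in>I. (cmod (a i))\<^sup>2)"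
  have s: "(\<Sum>i\<in>I. a i * cnj (a i)) = complex_of_real s"
    unfolding s_def of_real_sum by (simp only: complex_norm_square)
  have "cinner u (e i) = a i" if "i \<in> I" for i
    unfolding u_def using assms that by (rule cinner_sum_orthonormal_left)
  then have "cinner (e i) u = cnj (a i)" if "i \<in> I" for i
    using cinner_conj[of "e i" u] that by simp
  then have uu: "cinner u u = complex_of_real s"
  proof -
    have "cinner u u = (\<Sum>i\<in>I. a i * cinner (e i) u)"
      by (simp add: u_def cinner_sum_left cinner_cscale_left)
    also have "\<dots> = complex_of_real s"
      unfolding s[symmetric] by (rule sum.cong) (simp_all add: \<open>\<And>i. i \<in> I \<Longrightarrow> cinner (e i) u = cnj (a i)\<close>)
    finally show ?thesis .
  qed
  have vu: "cinner v u = complex_of_real s"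
    unfolding s[symmetric] by (simp add: u_def cinner_sum_right cinner_cscale_right a_def mult.commute)
  then have uv: "cinner u v = complex_of_real s"
    using cinner_conj[of u v] by simp
  have "cinner (v - u) (v - u) = cinner v v - cinner v u - cinner u v + cinner u u"
    by (simp add: cinner_diff_left cinner_diff_right)
  also have "\<dots> = complex_of_real ((norm v)\<^sup>2 - s)"
    unfolding vu uu uv cinner_self[of v] by simp
  finally have "0 \<le> (norm v)\<^sup>2 - s"
    using cinner_ge_zero[of "v - u"] by simp
  moreover have "(\<Sum>i\<in>I. (cmod (cinner (e i) v))\<^sup>2) = s"
    unfolding s_def a_def by (intro sum.cong refl) (metis cinner_conj complex_mod_cnj)
  ultimately show ?thesis
    by simp
qed

lemma norm_cinner_le: "cmod (cinner x y) \<le> norm x * norm (y::'a::complex_inner)"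
proof (cases "y = 0")
  case True
  then show ?thesis by simp
next
  case False
  define e where "e = cscale (1 / norm y) y"
  have "orthonormal_on {()} (\<lambda>_. e)"
    using cinner_normalize_self[OF False] by (simp add: orthonormal_on_def e_def)
  then have "(cmod (cinner e x))\<^sup>2 \<le> (norm x)\<^sup>2"
    using bessel_inequality[of "{()}"] by simp
  moreover have "cmod (cinner e x) = cmod (cinner x e)"
    by (metis cinner_conj complex_mod_cnj)
  ultimately have "cmod (cinner x e) \<le> norm x"
    by (simp add: power2_le_iff_abs_le)
  moreover have "cinner x e = cinner x y / norm y"
    by (simp add: e_def cinner_cscale_right)
  ultimately show ?thesis
    using False by (simp add: norm_divide divide_le_eq mult.commute)
qed

lemma bounded_linear_cinner_right: "bounded_linear (cinner (f::'a::complex_inner))"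
proof (rule bounded_linear_intro[where K = "norm f"])
  show "cinner f (r *\<^sub>R x) = r *\<^sub>R cinner f x" for r x
    by (simp add: scaleR_cscale cinner_cscale_right scaleR_conv_of_real)
  show "norm (cinner f x) \<le> norm x * norm f" for x
    using norm_cinner_le[of f x] by (simp add: mult.commute)
qed (rule cinner_add_right)

lemma orthonormal_on_insert:
  assumes "orthonormal_on I e" "cinner w w = 1" "\<And>k. k \<in> I \<Longrightarrow> cinner w (e k) = 0"
  shows "orthonormal_on (insert i I) (e(i := w))"
proof -
  have "cinner (e k) w = 0" if "k \<in> I" for k
    using assms(3)[OF that] cinner_conj[of "e k" w] by simp
  then show ?thesis
    using assms by (auto simp: orthonormal_on_def)
qed

lemma orthonormal_on_inj_on: "orthonormal_on I e \<Longrightarrow> inj_on e I"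
  by (rule inj_onI) (metis one_neq_zero orthonormal_on_def)

text \<open>Gram--Schmidt: a vector outside the span of \<open>e ` {..<N}\<close>, with its projection removed
  and normalized, extends the family.\<close>
lemma infinite_dimensional_orthonormal_family:
  assumes "infinite_dimensional TYPE('a::complex_inner)"
  shows "\<exists>e::nat \<Rightarrow> 'a. orthonormal_on {..<N} e"
proof (induction N)
  case 0
  show ?case by (simp add: orthonormal_on_def)
next
  case (Suc N)
  then obtain e :: "nat \<Rightarrow> 'a" where on: "orthonormal_on {..<N} e"
    by blast
  obtain x :: 'a where x: "\<And>c. x \<noteq> (\<Sum>s\<in>e ` {..<N}. cscale (c s) s)"
    using assms unfolding infinite_dimensional_def by blast
  define w where "w = x - (\<Sum>i<N. cscale (cinner x (e i)) (e i))"
  have "w \<noteq> 0"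
  proof
    assume "w = 0"
    then have "x = (\<Sum>i<N. cscale (cinner x (e i)) (e i))"
      by (simp add: w_def)
    also have "\<dots> = (\<Sum>s\<in>e ` {..<N}. cscale (cinner x s) s)"
      by (simp add: sum.reindex[OF orthonormal_on_inj_on[OF on]])
    finally show False
      using x by blast
  qed
  have "cinner w (e k) = 0" if "k < N" for k
    using cinner_sum_orthonormal_left[OF _ on, of k "\<lambda>i. cinner x (e i)"] that
    by (simp add: w_def cinner_diff_left)
  then have "orthonormal_on (insert N {..<N}) (e(N := cscale (1 / norm w) w))"
    by (intro orthonormal_on_insert[OF on cinner_normalize_self[OF \<open>w \<noteq> 0\<close>]])
      (simp add: cinner_cscale_left)
  then show ?case
    by (auto simp: lessThan_Suc)
qed

lemma Cauchy_blinfun_uniform_convergence: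
  fixes X :: "nat \<Rightarrow> 'a::real_normed_vector \<Rightarrow>\<^sub>L 'b::real_normed_vector"
  assumes X: "Cauchy X" and v: "\<And>x. (\<lambda>n. X n x) \<longlonglongrightarrow> v x" and "e > 0"
  shows "\<exists>N. \<forall>n\<ge>N. \<forall>x. norm (X n x - v x) \<le> e * norm x"
proof -
  obtain N where N: "\<And>m n. m \<ge> N \<Longrightarrow> n \<ge> N \<Longrightarrow> norm (X m - X n) < e"
    using CauchyD[OF X \<open>e > 0\<close>] by blast
  have "norm (X n x - v x) \<le> e * norm x" if "n \<ge> N" for n x
  proof (rule tendsto_le[OF trivial_limit_sequentially tendsto_const])
    show "(\<lambda>m. norm (X n x - X m x)) \<longlonglongrightarrow> norm (X n x - v x)"
      by (intro tendsto_intros v)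
    show "\<forall>\<^sub>F m in sequentially. norm (X n x - X m x) \<le> e * norm x"
      using eventually_ge_at_top[of N]
    proof eventually_elim
      case (elim m)
      have "norm (X n x - X m x) \<le> norm (X n - X m) * norm x"
        by (metis blinfun.diff_left norm_blinfun)
      also have "\<dots> \<le> e * norm x"
        using N[OF \<open>n \<ge> N\<close> elim] by (simp add: mult_right_mono)
      finally show ?case .
    qed
  qed
  then show ?thesis
    by blast
qed

text \<open>The library instance \<open>blinfun :: (real_normed_vector, banach) banach\<close> does not apply here:
  the sort \<open>{real_normed_vector, complete_space}\<close> of the Hilbert space is not recognised as
  \<open>banach\<close>.\<close>
lemma convergent_blinfun_if_Cauchy:
  fixes X :: "nat \<Rightarrow> 'a::real_normed_vector \<Rightarrow>\<^sub>L 'b::{real_normed_vector, complete_space}"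
  assumes X: "Cauchy X"
  shows "convergent X"
proof -
  have "Cauchy (\<lambda>n. X n x)" for x
    using bounded_linear.Cauchy[OF blinfun.bounded_linear_left X] .
  then obtain v where v: "\<And>x. (\<lambda>n. X n x) \<longlonglongrightarrow> v x"
    unfolding Cauchy_convergent_iff convergent_def by metis
  note uniform = Cauchy_blinfun_uniform_convergence[OF X v]
  then obtain N1 where N1: "\<And>x. norm (X N1 x - v x) \<le> norm x"
    by (metis mult_1 zero_less_one order_refl)
  have "bounded_linear v"
  proof
    show "v (x + y) = v x + v y" for x y
      using tendsto_add[OF v[of x] v[of y]] by (intro LIMSEQ_unique[OF v]) (simp add: blinfun.add_right)
    show "v (r *\<^sub>R x) = r *\<^sub>R v x" for r x
      using tendsto_scaleR[OF tendsto_const v[of x]] by (intro LIMSEQ_unique[OF v]) (simp add: blinfun.scaleR_right)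
    have "norm (v x) \<le> norm x * (norm (X N1) + 1)" for x
      using norm_triangle_ineq4[of "X N1 x" "X N1 x - v x"] norm_blinfun[of "X N1" x] N1[of x]
      by (simp add: algebra_simps)
    then show "\<exists>K. \<forall>x. norm (v x) \<le> norm x * K"
      by blast
  qed
  have "X \<longlonglongrightarrow> Blinfun v"
  proof (rule LIMSEQ_I)
    fix r :: real
    assume "r > 0"
    then obtain N where N: "\<And>n x. n \<ge> N \<Longrightarrow> norm (X n x - v x) \<le> r / 2 * norm x"
      using uniform[of "r / 2"] by auto
    have "norm (X n - Blinfun v) \<le> r / 2" if "n \<ge> N" for n
      using \<open>r > 0\<close> N[OF that]
      by (intro norm_blinfun_bound) (simp_all add: blinfun.diff_left bounded_linear_Blinfun_apply[OF \<open>bounded_linear v\<close>])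
    then show "\<exists>N. \<forall>n\<ge>N. norm (X n - Blinfun v) < r"
      using \<open>r > 0\<close> by (smt (verit) field_sum_of_halves)
  qed
  then show ?thesis
    by (rule convergentI)
qed

lemma summable_blinfun_comparison:
  fixes f :: "nat \<Rightarrow> 'a::real_normed_vector \<Rightarrow>\<^sub>L 'b::{real_normed_vector, complete_space}"
  assumes fg: "\<And>n. norm (f n) \<le> g n" and g: "summable g"
  shows "summable f"
proof -
  have "norm ((\<Sum>i<m. f i) - (\<Sum>i<n. f i)) \<le> norm ((\<Sum>i<m. g i) - (\<Sum>i<n. g i))" if "n \<le> m" for m n
  proof -
    have "norm ((\<Sum>i<m. f i) - (\<Sum>i<n. f i)) = norm (sum f {n..<m})"
      using sum_diff_nat_ivl[OF le0 that, of f] by (simp add: atLeast0LessThan)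
    also have "\<dots> \<le> sum g {n..<m}"
      by (rule order_trans[OF norm_sum sum_mono[OF fg]])
    also have "\<dots> = (\<Sum>i<m. g i) - (\<Sum>i<n. g i)"
      using sum_diff_nat_ivl[OF le0 that, of g] by (simp add: atLeast0LessThan)
    finally show ?thesis by simp
  qed
  then have le: "norm ((\<Sum>i<m. f i) - (\<Sum>i<n. f i)) \<le> norm ((\<Sum>i<m. g i) - (\<Sum>i<n. g i))" for m n
    by (metis nle_le norm_minus_commute)
  have "Cauchy (\<lambda>k. \<Sum>i<k. g i)"
    using g by (simp add: summable_iff_convergent Cauchy_convergent_iff)
  then have "Cauchy (\<lambda>k. \<Sum>i<k. f i)"
    unfolding Cauchy_iff by (meson le le_less_trans)
  then show ?thesis
    by (simp add: summable_iff_convergent convergent_blinfun_if_Cauchy)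
qed

lemma norm_op_power_le: "norm (op_power A n) \<le> norm A ^ n"
proof (induction n)
  case 0
  show ?case by (simp add: norm_blinfun_id_le)
next
  case (Suc n)
  have "norm (op_power A (Suc n)) \<le> norm A * norm (op_power A n)"
    by (simp add: norm_blinfun_compose)
  also have "\<dots> \<le> norm A * norm A ^ n"
    using Suc by (simp add: mult_left_mono)
  finally show ?case by simp
qed

lemma op_exp_sums:
  fixes A :: "'a::{real_normed_vector, complete_space} \<Rightarrow>\<^sub>L 'a"
  shows "(\<lambda>n. (t ^ n / fact n) *\<^sub>R op_power A n) sums op_exp t A"
proof -
  have "norm ((t ^ n / fact n) *\<^sub>R op_power A n) \<le> inverse (fact n) * (\<bar>t\<bar> * norm A) ^ n" for n
  proof -
    have "norm ((t ^ n / fact n) *\<^sub>R op_power A n) = \<bar>t\<bar> ^ n / fact n * norm (op_power A n)"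
      by (simp add: power_abs)
    also have "\<dots> \<le> \<bar>t\<bar> ^ n / fact n * norm A ^ n"
      by (rule mult_left_mono[OF norm_op_power_le]) simp
    finally show ?thesis
      by (simp add: power_mult_distrib divide_inverse mult_ac)
  qed
  then have "summable (\<lambda>n. (t ^ n / fact n) *\<^sub>R op_power A n)"
    by (rule summable_blinfun_comparison[OF _ summable_exp])
  then show ?thesis
    unfolding op_exp_def by (rule summable_sums)
qed

lemma borel_measurable_op_exp:
  fixes A :: "'a::{real_normed_vector, complete_space} \<Rightarrow>\<^sub>L 'a"
  shows "(\<lambda>t. op_exp t A) \<in> borel_measurable borel"
proof (rule borel_measurable_LIMSEQ_metric)
  show "(\<lambda>t. \<Sum>n<k. (t ^ n / fact n) *\<^sub>R op_power A n) \<in> borel_measurable borel" for k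
    by (intro borel_measurable_continuous_onI continuous_intros) auto
  show "(\<lambda>k. \<Sum>n<k. (t ^ n / fact n) *\<^sub>R op_power A n) \<longlonglongrightarrow> op_exp t A" for t
    using op_exp_sums[of t A] unfolding sums_def .
qed

lemma borel_measurable_cinner_op_exp:
  fixes A :: "'a::{complex_inner, complete_space} \<Rightarrow>\<^sub>L 'a"
  shows "(\<lambda>t. cinner f (blinfun_apply (op_exp t A) g)) \<in> borel_measurable borel"
proof -
  have "bounded_linear (\<lambda>B::'a \<Rightarrow>\<^sub>L 'a. cinner f (blinfun_apply B g))"
    by (rule bounded_linear_compose[OF bounded_linear_cinner_right]) simp
  then have "(\<lambda>B::'a \<Rightarrow>\<^sub>L 'a. cinner f (blinfun_apply B g)) \<in> borel_measurable borel"
    by (intro borel_measurable_continuous_onI linear_continuous_on)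
  from measurable_compose[OF borel_measurable_op_exp[of A] this] show ?thesis
    by (simp add: o_def)
qed

lemma nn_integral_exp_decay:
  fixes a l :: real
  assumes "0 \<le> a" "0 < l"
  shows "(\<integral>\<^sup>+ t\<in>{0..}. ennreal (a * exp (- l * t)) \<partial>lborel) = ennreal (a / l)"
proof -
  have "((\<lambda>t. a * exp (- l * t)) has_integral a / l) {0..}"
    using has_integral_mult_right[OF has_integral_exp_minus_to_infinity[OF assms(2), of 0], of a]
    by simp
  then show ?thesis
    using assms(1) by (intro nn_integral_has_integral_lebesgue') simp_all
qed

lemma orthonormal_orbit_integrals_le:
  fixes A :: "'a::{complex_inner, complete_space} \<Rightarrow>\<^sub>L 'a"
  assumes bound: "\<And>t. t \<ge> 0 \<Longrightarrow> norm (op_exp t A) \<le> M * exp (\<omega> * t)" and "\<omega> < 0"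
    and "finite I" "orthonormal_on I e"
  shows "(\<Sum>i\<in>I. \<integral>\<^sup>+ t\<in>{0..}. ennreal ((cmod (cinner (e i) (blinfun_apply (op_exp t A) g)))\<^sup>2) \<partial>lborel)
    \<le> ennreal ((M * norm g)\<^sup>2 / (- 2 * \<omega>))"
proof -
  have pointwise: "(\<Sum>i\<in>I. (cmod (cinner (e i) (blinfun_apply (op_exp t A) g)))\<^sup>2)
      \<le> (M * norm g)\<^sup>2 * exp (2 * \<omega> * t)" if "t \<ge> 0" for t
  proof -
    have "norm (blinfun_apply (op_exp t A) g) \<le> M * exp (\<omega> * t) * norm g"
      by (rule order_trans[OF norm_blinfun mult_right_mono[OF bound[OF that]]]) simp
    then have "(norm (blinfun_apply (op_exp t A) g))\<^sup>2 \<le> (M * exp (\<omega> * t) * norm g)\<^sup>2"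
      by (intro power_mono) simp_all
    also have "\<dots> = (M * norm g)\<^sup>2 * exp (2 * \<omega> * t)"
      by (simp add: power_mult_distrib exp_of_nat_mult[symmetric])
    finally show ?thesis
      using bessel_inequality[OF assms(3,4)] order_trans by blast
  qed
  have "(\<Sum>i\<in>I. \<integral>\<^sup>+ t\<in>{0..}. ennreal ((cmod (cinner (e i) (blinfun_apply (op_exp t A) g)))\<^sup>2) \<partial>lborel)
      = (\<integral>\<^sup>+ t\<in>{0..}. ennreal (\<Sum>i\<in>I. (cmod (cinner (e i) (blinfun_apply (op_exp t A) g)))\<^sup>2) \<partial>lborel)"
  proof -
    have [measurable]: "(\<lambda>t. cinner (e i) (blinfun_apply (op_exp t A) g)) \<in> borel_measurable borel" for i
      by (rule borel_measurable_cinner_op_exp)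
    have "(\<Sum>i\<in>I. \<integral>\<^sup>+ t\<in>{0..}. ennreal ((cmod (cinner (e i) (blinfun_apply (op_exp t A) g)))\<^sup>2) \<partial>lborel)
      = (\<integral>\<^sup>+ t. (\<Sum>i\<in>I. ennreal ((cmod (cinner (e i) (blinfun_apply (op_exp t A) g)))\<^sup>2) * indicator {0..} t) \<partial>lborel)"
      by (rule nn_integral_sum[symmetric]) measurable
    then show ?thesis
      by (simp add: sum_distrib_right[symmetric] sum_ennreal)
  qed
  also have "\<dots> \<le> (\<integral>\<^sup>+ t\<in>{0..}. ennreal ((M * norm g)\<^sup>2 * exp (- (- 2 * \<omega>) * t)) \<partial>lborel)"
    by (intro nn_integral_mono) (auto simp: indicator_def pointwise)
  also have "\<dots> = ennreal ((M * norm g)\<^sup>2 / (- 2 * \<omega>))"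
    using \<open>\<omega> < 0\<close> by (intro nn_integral_exp_decay) simp_all
  finally show ?thesis .
qed

lemma card_orthonormal_le_of_frame_lower_bound:
  fixes A :: "'a::{complex_inner, complete_space} \<Rightarrow>\<^sub>L 'a" and e :: "'b \<Rightarrow> 'a"
  assumes "finite G" "0 \<le> c"
    and lower: "\<And>f. ennreal (c * (norm f)\<^sup>2)
      \<le> (\<Sum>g\<in>G. \<integral>\<^sup>+ t\<in>{0..}. ennreal ((cmod (cinner f (blinfun_apply (op_exp t A) g)))\<^sup>2) \<partial>lborel)"
    and bound: "\<And>t. t \<ge> 0 \<Longrightarrow> norm (op_exp t A) \<le> M * exp (\<omega> * t)" and "\<omega> < 0"
    and "finite I" "orthonormal_on I e"
  shows "real (card I) * c \<le> (\<Sum>g\<in>G. (M * norm g)\<^sup>2 / (- 2 * \<omega>))"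
proof -
  have nonneg: "0 \<le> (M * norm g)\<^sup>2 / (- 2 * \<omega>)" for g
    using \<open>\<omega> < 0\<close> by (intro divide_nonneg_pos) simp_all
  have "ennreal (real (card I) * c) = (\<Sum>i\<in>I. ennreal (c * (norm (e i))\<^sup>2))"
    using \<open>0 \<le> c\<close> orthonormal_on_norm[OF \<open>orthonormal_on I e\<close>]
    by (simp add: ennreal_mult ennreal_of_nat_eq_real_of_nat)
  also have "\<dots> \<le> (\<Sum>i\<in>I. \<Sum>g\<in>G.
      \<integral>\<^sup>+ t\<in>{0..}. ennreal ((cmod (cinner (e i) (blinfun_apply (op_exp t A) g)))\<^sup>2) \<partial>lborel)"
    by (intro sum_mono lower)
  also have "\<dots> = (\<Sum>g\<in>G. \<Sum>i\<in>I.
      \<integral>\<^sup>+ t\<in>{0..}. ennreal ((cmod (cinner (e i) (blinfun_apply (op_exp t A) g)))\<^sup>2) \<partial>lborel)"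
    by (rule sum.swap)
  also have "\<dots> \<le> (\<Sum>g\<in>G. ennreal ((M * norm g)\<^sup>2 / (- 2 * \<omega>)))"
    by (intro sum_mono orthonormal_orbit_integrals_le[OF bound \<open>\<omega> < 0\<close> assms(6,7)])
  also have "\<dots> = ennreal (\<Sum>g\<in>G. (M * norm g)\<^sup>2 / (- 2 * \<omega>))"
    using nonneg by (rule sum_ennreal)
  finally show ?thesis
    using nonneg by (metis ennreal_le_iff sum_nonneg)
qed

theorem mainTheorem6:
  fixes A :: "'a::{complex_inner, complete_space} \<Rightarrow>\<^sub>L 'a"
    and G :: "'a set"
  assumes "infinite_dimensional TYPE('a)"
    and "separable_type TYPE('a)"
    and "complex_linear_op A"
    and "exp_stable A"
    and "countable G"
    and "semi_cont_frame A G {0..}"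
  shows "infinite G"
proof
  assume "finite G"
  obtain c where "c > 0" and lower: "\<And>f. ennreal (c * (norm f)\<^sup>2)
      \<le> (\<Sum>g\<in>G. \<integral>\<^sup>+ t\<in>{0..}. ennreal ((cmod (cinner f (blinfun_apply (op_exp t A) g)))\<^sup>2) \<partial>lborel)"
    using assms(6) \<open>finite G\<close> unfolding semi_cont_frame_def by auto
  obtain M \<omega> where bound: "\<And>t. t \<ge> 0 \<Longrightarrow> norm (op_exp t A) \<le> M * exp (\<omega> * t)" and "\<omega> < 0"
    using assms(4) unfolding exp_stable_def by blast
  define K where "K = (\<Sum>g\<in>G. (M * norm g)\<^sup>2 / (- 2 * \<omega>))"
  obtain N :: nat where "K / c < N"
    using reals_Archimedean2 by blast
  obtain e :: "nat \<Rightarrow> 'a" where "orthonormal_on {..<N} e"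
    using infinite_dimensional_orthonormal_family[OF assms(1)] by blast
  then have "real N * c \<le> K"
    using card_orthonormal_le_of_frame_lower_bound[OF \<open>finite G\<close> _ lower bound \<open>\<omega> < 0\<close>] \<open>c > 0\<close>
    unfolding K_def by (metis card_lessThan finite_lessThan less_imp_le)
  with \<open>K / c < N\<close> \<open>c > 0\<close> show False
    by (simp add: divide_less_eq)
qed

end
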